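(* Let $F=(A,R)$ be an abstract argumentation framework and $S\subseteq A$. Then $S$ is an initial set of $F$ if and only if there is a strongly connected component $F'=(A',R')$ of $F$ with $S\subseteq A'$ such that $S$ is an initial set of $F'$ and $S^-\subseteq A'$ (where $S^-$ is computed in $F$).
   Context: An abstract argumentation framework is a pair $F=(A,R)$ with $A$ a finite set and $R\subseteq A\times A$ ($a\to b$ means $(a,b)\in R$). $S^-=\{a\in A\mid \exists b\in S: a\to b\}$. $S$ is admissible if it is conflict-free and every attacker of an element of $S$ is attacked by some element of $S$. An initial set is a non-empty admissible set with no non-empty admissible proper subset. For $X\subseteq A$, $F|_X=(X,R\cap(X\times X))$. A strongly connected component (SCC) of $F$ is a framework $F|_{A'}$ such that there is a directed path in $F|_{A'}$ between any two arguments of $A'$ and $A'$ is maximal with this property. (Every initial set lies inside a single SCC, denoted $\mathrm{SCC}(S)$ in the paper.) *)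

theory Defs
  imports Main
begin

definition AF :: "'a set \<Rightarrow> ('a \<times> 'a) set \<Rightarrow> bool" where
  "AF A R \<longleftrightarrow> finite A \<and> R \<subseteq> A \<times> A"

text \<open>Restriction F|_X = (X, R \<inter> (X \<times> X)); we only need the attack part.\<close>
definition restr :: "('a \<times> 'a) set \<Rightarrow> 'a set \<Rightarrow> ('a \<times> 'a) set" where
  "restr R X = R \<inter> (X \<times> X)"

definition attackers :: "'a set \<Rightarrow> ('a \<times> 'a) set \<Rightarrow> 'a set \<Rightarrow> 'a set" where
  "attackers A R S = {a \<in> A. \<exists>b\<in>S. (a, b) \<in> R}"

definition conflict_free :: "('a \<times> 'a) set \<Rightarrow> 'a set \<Rightarrow> bool" where
  "conflict_free R S \<longleftrightarrow> (\<forall>a\<in>S. \<forall>b\<in>S. (a, b) \<notin> R)"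

definition admissible :: "'a set \<Rightarrow> ('a \<times> 'a) set \<Rightarrow> 'a set \<Rightarrow> bool" where
  "admissible A R S \<longleftrightarrow> S \<subseteq> A \<and> conflict_free R S \<and>
     (\<forall>b\<in>S. \<forall>a\<in>A. (a, b) \<in> R \<longrightarrow> (\<exists>c\<in>S. (c, a) \<in> R))"

definition initial_set :: "'a set \<Rightarrow> ('a \<times> 'a) set \<Rightarrow> 'a set \<Rightarrow> bool" where
  "initial_set A R S \<longleftrightarrow> S \<noteq> {} \<and> admissible A R S \<and>
     (\<forall>T. T \<noteq> {} \<and> T \<subset> S \<longrightarrow> \<not> admissible A R T)"

definition strongly_connected :: "('a \<times> 'a) set \<Rightarrow> 'a set \<Rightarrow> bool" where
  "strongly_connected R X \<longleftrightarrow> (\<forall>x\<in>X. \<forall>y\<in>X. (x, y) \<in> (restr R X)\<^sup>*)"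

definition is_SCC :: "'a set \<Rightarrow> ('a \<times> 'a) set \<Rightarrow> 'a set \<Rightarrow> bool" where
  "is_SCC A R A' \<longleftrightarrow> A' \<noteq> {} \<and> A' \<subseteq> A \<and> strongly_connected R A' \<and>
     (\<forall>X. A' \<subset> X \<and> X \<subseteq> A \<longrightarrow> \<not> strongly_connected R X)"

end

theory Submission
  imports Defs
begin

text \<open>
  An admissible set stays admissible when restricted to any subframework containing it together
  with its attackers, so the two notions of initial set agree on such subframeworks.
  Conversely, in an initial set S pick s0 whose set of ancestors is minimal. The elements
  of S from which s0 is reachable form a non-empty admissible subset, hence all of S, and by
  minimality s0 reaches all of S back. So S lies in the strong component of s0, and so do its
  attackers: each one reaches S and is attacked by S.
\<close>

lemma attackers_mono: "T \<subseteq> S \<Longrightarrow> attackers A R T \<subseteq> attackers A R S"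
  unfolding attackers_def by blast

lemma admissible_restr_iff:
  assumes "A' \<subseteq> A" "T \<subseteq> A'" "attackers A R T \<subseteq> A'"
  shows "admissible A' (restr R A') T \<longleftrightarrow> admissible A R T"
  using assms unfolding admissible_def conflict_free_def restr_def attackers_def by blast

lemma initial_set_restr_iff:
  assumes "A' \<subseteq> A" "S \<subseteq> A'" "attackers A R S \<subseteq> A'"
  shows "initial_set A' (restr R A') S \<longleftrightarrow> initial_set A R S"
proof -
  have "admissible A' (restr R A') T \<longleftrightarrow> admissible A R T" if "T \<subseteq> S" for T
    using assms that attackers_mono[OF that, of A R] by (intro admissible_restr_iff) auto
  then show ?thesis
    unfolding initial_set_def by blast
qed

definition strong_component :: "'a set \<Rightarrow> ('a \<times> 'a) set \<Rightarrow> 'a \<Rightarrow> 'a set" where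
  "strong_component A R x = {z \<in> A. (x, z) \<in> R\<^sup>* \<and> (z, x) \<in> R\<^sup>*}"

lemma rtrancl_restr_strong_component:
  assumes "R \<subseteq> A \<times> A" and "(y, z) \<in> R\<^sup>*"
    and "y \<in> strong_component A R x" "z \<in> strong_component A R x"
  shows "(y, z) \<in> (restr R (strong_component A R x))\<^sup>*"
  using assms(2,3)
proof (induction rule: converse_rtrancl_induct)
  case base
  then show ?case by simp
next
  case (step y y')
  have "y' \<in> strong_component A R x"
    using assms(1,4) step.prems step.hyps unfolding strong_component_def
    by (blast intro: rtrancl_into_rtrancl rtrancl_trans)
  then have "(y, y') \<in> restr R (strong_component A R x)"
    using step.prems step.hyps(1) unfolding restr_def by blast
  then show ?case
    using step.IH[OF \<open>y' \<in> strong_component A R x\<close>] by (rule converse_rtrancl_into_rtrancl)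
qed

lemma is_SCC_strong_component:
  assumes "R \<subseteq> A \<times> A" "x \<in> A"
  shows "is_SCC A R (strong_component A R x)"
  unfolding is_SCC_def
proof (intro conjI allI impI)
  show "strong_component A R x \<noteq> {}" "strong_component A R x \<subseteq> A"
    using assms(2) unfolding strong_component_def by auto
  show "strongly_connected R (strong_component A R x)"
    unfolding strongly_connected_def
  proof (intro ballI)
    fix y z assume y: "y \<in> strong_component A R x" and z: "z \<in> strong_component A R x"
    then have "(y, z) \<in> R\<^sup>*"
      unfolding strong_component_def by (blast intro: rtrancl_trans)
    then show "(y, z) \<in> (restr R (strong_component A R x))\<^sup>*"
      using rtrancl_restr_strong_component[OF assms(1) _ y z] by blast
  qed
next
  fix X assume X: "strong_component A R x \<subset> X \<and> X \<subseteq> A"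
  then obtain y where y: "y \<in> X" "y \<notin> strong_component A R x"
    by blast
  have "x \<in> X"
    using X assms(2) unfolding strong_component_def by blast
  have "restr R X \<subseteq> R"
    unfolding restr_def by blast
  then have "(x, y) \<notin> (restr R X)\<^sup>* \<or> (y, x) \<notin> (restr R X)\<^sup>*"
    using y X rtrancl_mono unfolding strong_component_def by blast
  then show "\<not> strongly_connected R X"
    using \<open>x \<in> X\<close> y(1) unfolding strongly_connected_def by blast
qed

lemma admissible_reaching:
  assumes "admissible A R S"
  shows "admissible A R {s \<in> S. (s, x) \<in> R\<^sup>*}"
  using assms unfolding admissible_def conflict_free_def
  by (blast intro: converse_rtrancl_into_rtrancl)

lemma initial_set_reaches:
  assumes "initial_set A R S" "s \<in> S" "x \<in> S"
  shows "(s, x) \<in> R\<^sup>*"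
proof (rule ccontr)
  assume "(s, x) \<notin> R\<^sup>*"
  let ?T = "{s \<in> S. (s, x) \<in> R\<^sup>*}"
  have "?T \<noteq> {}" "?T \<subset> S"
    using assms(2,3) \<open>(s, x) \<notin> R\<^sup>*\<close> by auto
  moreover have "admissible A R ?T"
    using assms(1) unfolding initial_set_def by (simp add: admissible_reaching)
  ultimately show False
    using assms(1) unfolding initial_set_def by simp
qed

lemma ex_reach_minimal:
  assumes "finite A" "S \<subseteq> A" "S \<noteq> {}"
  obtains x where "x \<in> S" "\<And>s. s \<in> S \<Longrightarrow> (s, x) \<in> R\<^sup>* \<Longrightarrow> (x, s) \<in> R\<^sup>*"
proof -
  define ancestors where "ancestors x = {y \<in> A. (y, x) \<in> R\<^sup>*}" for x
  obtain s1 where "s1 \<in> S"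
    using assms(3) by blast
  then obtain x where x: "x \<in> S"
    and least: "\<And>s. s \<in> S \<Longrightarrow> card (ancestors x) \<le> card (ancestors s)"
    using ex_has_least_nat[of "\<lambda>x. x \<in> S" s1 "\<lambda>x. card (ancestors x)"] by blast
  have "(x, s) \<in> R\<^sup>*" if "s \<in> S" "(s, x) \<in> R\<^sup>*" for s
  proof (rule ccontr)
    assume "(x, s) \<notin> R\<^sup>*"
    have "ancestors s \<subseteq> ancestors x"
      using \<open>(s, x) \<in> R\<^sup>*\<close> unfolding ancestors_def by (blast intro: rtrancl_trans)
    moreover have "x \<in> ancestors x" "x \<notin> ancestors s"
      using x assms(2) \<open>(x, s) \<notin> R\<^sup>*\<close> unfolding ancestors_def by auto
    ultimately have "ancestors s \<subset> ancestors x"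
      by blast
    then have "card (ancestors s) < card (ancestors x)"
      using assms(1) unfolding ancestors_def by (simp add: psubset_card_mono)
    then show False
      using least[OF \<open>s \<in> S\<close>] by simp
  qed
  then show ?thesis
    using x that by blast
qed

lemma initial_set_in_strong_component:
  assumes "finite A" "initial_set A R S"
  obtains x where "x \<in> A" "S \<subseteq> strong_component A R x"
    "attackers A R S \<subseteq> strong_component A R x"
proof -
  have S: "S \<subseteq> A" "S \<noteq> {}" "admissible A R S"
    using assms(2) unfolding initial_set_def admissible_def by auto
  obtain x where x: "x \<in> S" and min: "\<And>s. s \<in> S \<Longrightarrow> (s, x) \<in> R\<^sup>* \<Longrightarrow> (x, s) \<in> R\<^sup>*"
    using ex_reach_minimal[OF assms(1) S(1,2)] by blast
  have reach: "(s, x) \<in> R\<^sup>*" "(x, s) \<in> R\<^sup>*" if "s \<in> S" for s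
    using initial_set_reaches[OF assms(2) that x] min[OF that] by auto
  have "attackers A R S \<subseteq> strong_component A R x"
  proof
    fix a assume "a \<in> attackers A R S"
    then obtain b where a: "a \<in> A" "b \<in> S" "(a, b) \<in> R"
      unfolding attackers_def by blast
    then obtain c where c: "c \<in> S" "(c, a) \<in> R"
      using S(3) unfolding admissible_def by blast
    have "(a, x) \<in> R\<^sup>*"
      using a(3) reach(1)[OF a(2)] by (rule converse_rtrancl_into_rtrancl)
    moreover have "(x, a) \<in> R\<^sup>*"
      using reach(2)[OF c(1)] c(2) by (rule rtrancl_into_rtrancl)
    ultimately show "a \<in> strong_component A R x"
      using a(1) unfolding strong_component_def by blast
  qed
  moreover have "S \<subseteq> strong_component A R x"
    using S(1) reach unfolding strong_component_def by blast
  ultimately show ?thesis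
    using that x S(1) by blast
qed

theorem proposition2:
  fixes A :: "'a set" and R :: "('a \<times> 'a) set" and S :: "'a set"
  assumes "AF A R" and "S \<subseteq> A"
  shows "initial_set A R S \<longleftrightarrow>
    (\<exists>A'. is_SCC A R A' \<and> S \<subseteq> A' \<and> initial_set A' (restr R A') S
           \<and> attackers A R S \<subseteq> A')"
proof
  assume S: "initial_set A R S"
  have "finite A" and R: "R \<subseteq> A \<times> A"
    using assms(1) unfolding AF_def by auto
  obtain x where "x \<in> A" and in_C: "S \<subseteq> strong_component A R x"
    "attackers A R S \<subseteq> strong_component A R x"
    by (rule initial_set_in_strong_component[OF \<open>finite A\<close> S])
  have "strong_component A R x \<subseteq> A"
    unfolding strong_component_def by blast
  then have "initial_set (strong_component A R x) (restr R (strong_component A R x)) S"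
    using initial_set_restr_iff[OF _ in_C] S by simp
  with is_SCC_strong_component[OF R \<open>x \<in> A\<close>] in_C
  show "\<exists>A'. is_SCC A R A' \<and> S \<subseteq> A' \<and> initial_set A' (restr R A') S
           \<and> attackers A R S \<subseteq> A'"
    by (intro exI[of _ "strong_component A R x"]) simp
next
  assume "\<exists>A'. is_SCC A R A' \<and> S \<subseteq> A' \<and> initial_set A' (restr R A') S
           \<and> attackers A R S \<subseteq> A'"
  then obtain A' where "is_SCC A R A'" "S \<subseteq> A'" "initial_set A' (restr R A') S"
    "attackers A R S \<subseteq> A'"
    by blast
  moreover have "A' \<subseteq> A"
    using \<open>is_SCC A R A'\<close> unfolding is_SCC_def by simp
  ultimately show "initial_set A R S"
    using initial_set_restr_iff[of A' A S R] by simp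
qed

end
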